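(* For every input sequence of requests $\sigma$ of the List Update with Time Windows problem, the algorithm ALG described in the context satisfies $$ALG(\sigma)\le 24\cdot OPT(\sigma).$$
   Context: List Update with Time Windows. A set $\mathbb{E}$ of $n$ elements is kept in an ordered list (position $1$ is the head). An input $\sigma$ is a sequence of requests $r_1,\dots,r_m$; request $r_k$ specifies an element $e_k\in\mathbb{E}$, an arrival time $a_k$ and a deadline $q_k\ge a_k$. At any time an algorithm may (a) perform an access up to position $i$, at cost $i$, which serves every pending request (arrived and not yet served) whose element currently lies in positions $1,\dots,i$; (b) swap two adjacent elements of its list at cost $1$. Actions are instantaneous (time does not advance). Every request $r_k$ must be served at some time in $[a_k,q_k]$. The cost of an algorithm on $\sigma$ is the total access cost plus the number of swaps. An online algorithm knows at time $t$ only the requests that have arrived by time $t$. $OPT(\sigma)$ denotes the minimum cost of an (offline) feasible solution; the online algorithm and $OPT$ start from the same initial list. Algorithm ALG: whenever the current time equals the deadline of at least one pending request, let the triggering element be the element at the largest current position among those elements having a pending request whose deadline is the current time, and let $i$ be its position. ALG accesses the first $\min(2i-1,n)$ positions (serving all pending requests for elements in them) and then moves the triggering element to the front of its list by $i-1$ adjacent swaps. *)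

theory Defs
  imports Complex_Main
begin

text \<open>List Update with Time Windows.  Lists are Isabelle lists (head = position 1),
  times are reals.\<close>

record 'a request =
  elem :: 'a
  arr  :: real
  dl   :: real

definition pos :: "'a list \<Rightarrow> 'a \<Rightarrow> nat" where
  "pos L x = length (takeWhile (\<lambda>y. y \<noteq> x) L) + 1"

definition move_to_front :: "'a \<Rightarrow> 'a list \<Rightarrow> 'a list" where
  "move_to_front x L = x # removeAll x L"

datatype action = Access nat | Swap nat
  \<comment> \<open>Access i: access up to position i (cost i);
      Swap j: swap the elements at positions j and j+1 (cost 1)\<close>

fun action_cost :: "action \<Rightarrow> nat" where
  "action_cost (Access i) = i"
| "action_cost (Swap j) = 1"

fun valid_action :: "nat \<Rightarrow> action \<Rightarrow> bool" where
  "valid_action n (Access i) = (1 \<le> i \<and> i \<le> n)"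
| "valid_action n (Swap j) = (1 \<le> j \<and> j < n)"

fun apply_action :: "'a list \<Rightarrow> action \<Rightarrow> 'a list" where
  "apply_action L (Access i) = L"
| "apply_action L (Swap j) = L[j - 1 := L ! j, j := L ! (j - 1)]"

type_synonym schedule = "(real \<times> action) list"

text \<open>List state just before the j-th event (0-based) of the schedule.\<close>
definition state_before :: "'a list \<Rightarrow> schedule \<Rightarrow> nat \<Rightarrow> 'a list" where
  "state_before L0 S j = foldl apply_action L0 (map snd (take j S))"

definition sched_cost :: "schedule \<Rightarrow> nat" where
  "sched_cost S = sum_list (map (action_cost \<circ> snd) S)"

text \<open>Request k is served by event j if event j is an access up to position i,
  happening in the time window of the request, with the requested element
  in positions 1..i at that moment.  (A request is then served at its first
  covering access after arrival, which lies within its window.)\<close>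
definition feasible :: "'a list \<Rightarrow> 'a request list \<Rightarrow> schedule \<Rightarrow> bool" where
  "feasible L0 rs S \<longleftrightarrow>
     sorted (map fst S) \<and>
     (\<forall>ev \<in> set S. valid_action (length L0) (snd ev)) \<and>
     (\<forall>k < length rs. \<exists>j < length S. \<exists>i.
         snd (S ! j) = Access i \<and>
         arr (rs ! k) \<le> fst (S ! j) \<and> fst (S ! j) \<le> dl (rs ! k) \<and>
         pos (state_before L0 S j) (elem (rs ! k)) \<le> i)"

definition OPT :: "'a list \<Rightarrow> 'a request list \<Rightarrow> nat" where
  "OPT L0 rs = Inf {sched_cost S | S. feasible L0 rs S}"

text \<open>State: current list, set of indices of served requests, accumulated cost.
  ALG acts only at deadline times, processed in increasing order.\<close>
definition alg_step :: "'a request list \<Rightarrow> 'a list \<times> nat set \<times> nat \<Rightarrow> real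
                          \<Rightarrow> 'a list \<times> nat set \<times> nat" where
  "alg_step rs st t =
    (let (L, served, c) = st;
         P = {k. k < length rs \<and> k \<notin> served \<and> arr (rs ! k) \<le> t};
         T = {k \<in> P. dl (rs ! k) = t}
     in if T = {} then st
        else let i = Max ((\<lambda>k. pos L (elem (rs ! k))) ` T);
                 x = L ! (i - 1);
                 j = min (2 * i - 1) (length L)
             in (move_to_front x L,
                 served \<union> {k \<in> P. pos L (elem (rs ! k)) \<le> j},
                 c + j + (i - 1)))"

definition deadlines :: "'a request list \<Rightarrow> real list" where
  "deadlines rs = sorted_list_of_set (dl ` set rs)"

definition ALG :: "'a list \<Rightarrow> 'a request list \<Rightarrow> nat" where
  "ALG L0 rs = snd (snd (foldl (alg_step rs) (L0, {}, 0) (deadlines rs)))"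

end

theory Submission
  imports Defs
begin

text \<open>Compare the run of ALG with a feasible schedule \<open>S\<close> of minimum cost through the potential
  \<open>5 \<cdot> #inversions\<close> between the two lists. At a trigger whose element \<open>x\<close> is at position \<open>i\<close>
  in ALG's list and at position \<open>p\<close> in the list of \<open>S\<close>, ALG pays at most \<open>2i - 1\<close> for the access
  and \<open>i - 1\<close> for moving \<open>x\<close> to the front, while the potential changes by \<open>10k - 5(i - 1)\<close>, where
  \<open>k \<le> min i p - 1\<close> counts the elements before \<open>x\<close> in both lists; hence the amortized cost is at
  most \<open>min (8i) (10p - 2i)\<close>. The schedule \<open>S\<close> serves the triggering request by an access of
  some depth \<open>d\<close>, and \<open>p\<close> exceeds \<open>d\<close> by at most the number of swaps of \<open>S\<close> moving \<open>x\<close> back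
  in between; each swap is charged this way by at most one trigger, because two triggering
  requests for the same element have disjoint time windows. The triggers served by one access of
  \<open>S\<close> have positions that at least double, since ALG's access to \<open>2i - 1\<close> serves everything
  pending up to there, and over a doubling sequence the bounds \<open>min (8i) (10d - 2i)\<close> sum to at most
  \<open>24d\<close>. As every swap of \<open>S\<close> raises the potential by at most 5 and is charged at most 10 more,
  ALG pays at most 24 times the access cost plus 15 times the number of swaps of \<open>S\<close>.\<close>

section \<open>Positions in a list\<close>

lemma pos_Cons: "pos (a # L) y = (if a = y then 1 else Suc (pos L y))"
  by (simp add: pos_def)

lemma pos_gt_0 [simp]: "0 < pos L y"
  by (simp add: pos_def)

lemma pos_ge_1: "1 \<le> pos L y"
  by (simp add: pos_def)

lemma pos_le_length: "y \<in> set L \<Longrightarrow> pos L y \<le> length L"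
  by (induction L) (auto simp: pos_Cons)

lemma nth_pos: "y \<in> set L \<Longrightarrow> L ! (pos L y - 1) = y"
  by (induction L) (auto simp: pos_Cons nth_Cons')

lemma pos_nth: "distinct L \<Longrightarrow> k < length L \<Longrightarrow> pos L (L ! k) = Suc k"
  by (induction L arbitrary: k) (auto simp: pos_Cons nth_Cons' split: nat.splits)

lemma pos_eq_iff: "y \<in> set L \<Longrightarrow> z \<in> set L \<Longrightarrow> pos L y = pos L z \<longleftrightarrow> y = z"
  by (metis nth_pos)

lemma pos_removeAll:
  assumes "distinct L" "x \<in> set L" "y \<in> set L" "y \<noteq> x"
  shows "pos (removeAll x L) y = (if pos L x < pos L y then pos L y - 1 else pos L y)"
  using assms by (induction L) (auto simp: pos_Cons pos_ge_1 Suc_le_eq)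

lemma pos_move_to_front_self: "pos (move_to_front x L) x = 1"
  by (simp add: move_to_front_def pos_Cons)

lemma pos_move_to_front:
  assumes "distinct L" "x \<in> set L" "y \<in> set L" "y \<noteq> x"
  shows "pos (move_to_front x L) y = (if pos L y < pos L x then pos L y + 1 else pos L y)"
  using assms pos_removeAll[OF assms] pos_eq_iff[of x L y] pos_ge_1[of L y]
  by (auto simp: move_to_front_def pos_Cons)

lemma set_move_to_front: "x \<in> set L \<Longrightarrow> set (move_to_front x L) = set L"
  by (auto simp: move_to_front_def)

lemma distinct_move_to_front: "distinct L \<Longrightarrow> distinct (move_to_front x L)"
  by (simp add: move_to_front_def distinct_removeAll)

lemma length_apply_action [simp]: "length (apply_action M a) = length M"
  by (cases a) simp_all

lemma set_apply_Swap: "j < length M \<Longrightarrow> set (apply_action M (Swap j)) = set M"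
  by (simp add: set_swap)

lemma distinct_apply_Swap: "j < length M \<Longrightarrow> distinct (apply_action M (Swap j)) = distinct M"
  by (simp add: distinct_swap)

lemma pos_apply_Swap:
  assumes "distinct M" "1 \<le> j" "j < length M" "w \<in> set M"
  shows "pos (apply_action M (Swap j)) w =
    (if w = M ! (j - 1) then j + 1 else if w = M ! j then j else pos M w)"
proof -
  let ?M' = "apply_action M (Swap j)"
  have dist': "distinct ?M'" and len': "length ?M' = length M"
    using assms by (simp_all add: distinct_swap)
  define k where "k = pos M w - 1"
  have k: "k < length M" "M ! k = w"
    using assms pos_le_length[of w M] pos_ge_1[of M w] nth_pos[of w M] by (auto simp: k_def)
  define i where "i = (if k = j - 1 then j else if k = j then j - 1 else k)"
  have "i < length M" "?M' ! i = w"
    using k assms by (auto simp: i_def nth_list_update)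
  then have "pos ?M' w = Suc i"
    using pos_nth[OF dist', of i] len' by simp
  moreover have "w = M ! (j - 1) \<longleftrightarrow> k = j - 1" "w = M ! j \<longleftrightarrow> k = j"
    using k assms nth_eq_iff_index_eq[OF assms(1)] by auto
  moreover have "pos M w = Suc k"
    using k pos_nth[OF assms(1)] by metis
  ultimately show ?thesis
    using assms by (auto simp: i_def)
qed

definition before :: "'a list \<Rightarrow> 'a \<Rightarrow> 'a set" where
  "before L x = {y \<in> set L. pos L y < pos L x}"

lemma card_before:
  assumes "distinct L" "x \<in> set L"
  shows "card (before L x) = pos L x - 1"
proof -
  have "before L x = (\<lambda>k. L ! k) ` {..<pos L x - 1}"
  proof (rule set_eqI)
    fix y
    have "y \<in> before L x \<Longrightarrow> y = L ! (pos L y - 1) \<and> pos L y - 1 < pos L x - 1"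
      using nth_pos pos_ge_1[of L y] by (fastforce simp: before_def)
    moreover have "pos L (L ! k) < pos L x" "L ! k \<in> set L" if "k < pos L x - 1" for k
      using that pos_le_length[OF assms(2)] pos_nth[OF assms(1), of k] by auto
    ultimately show "y \<in> before L x \<longleftrightarrow> y \<in> (\<lambda>k. L ! k) ` {..<pos L x - 1}"
      unfolding before_def by blast
  qed
  moreover have "inj_on (\<lambda>k. L ! k) {..<pos L x - 1}"
    using assms pos_le_length[OF assms(2)] by (auto simp: inj_on_def nth_eq_iff_index_eq)
  ultimately show ?thesis
    by (simp add: card_image)
qed

section \<open>Inversions between two lists\<close>

definition inversions :: "'a list \<Rightarrow> 'a list \<Rightarrow> ('a \<times> 'a) set" where
  "inversions L M = {(y, z). y \<in> set L \<and> z \<in> set L \<and> pos L y < pos L z \<and> pos M z < pos M y}"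

lemma finite_inversions: "finite (inversions L M)"
  by (rule finite_subset[of _ "set L \<times> set L"]) (auto simp: inversions_def)

lemma inversions_self: "inversions L L = {}"
  by (auto simp: inversions_def)

lemma card_inversions_Swap_le:
  assumes "distinct M" "1 \<le> j" "j < length M" "set M = set L"
  shows "card (inversions L (apply_action M (Swap j))) \<le> card (inversions L M) + 1"
proof -
  let ?a = "M ! (j - 1)" and ?b = "M ! j"
  let ?swapped = "{(y, z). {y, z} = {?a, ?b} \<and> pos L y < pos L z}"
  have ab: "?a \<in> set M" "?b \<in> set M" "?a \<noteq> ?b"
    using assms(2,3) nth_eq_iff_index_eq[OF assms(1), of "j - 1" j] by simp_all
  have pos_ab: "pos M ?a = j" "pos M ?b = j + 1"
    using pos_nth[OF assms(1), of "j - 1"] pos_nth[OF assms(1), of j] assms(2,3) by simp_all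
  have "inversions L (apply_action M (Swap j)) \<subseteq> inversions L M \<union> ?swapped"
  proof (rule subsetI)
    fix p assume p: "p \<in> inversions L (apply_action M (Swap j))"
    obtain y z where [simp]: "p = (y, z)" by force
    show "p \<in> inversions L M \<union> ?swapped"
    proof (cases "p \<in> ?swapped")
      case False
    have inv: "(y, z) \<in> inversions L (apply_action M (Swap j))" using p by simp
    have yz: "y \<in> set M" "z \<in> set M" and "pos L y < pos L z"
      using assms(4) inv by (auto simp: inversions_def)
    then have "{y, z} \<noteq> {?a, ?b}"
      using False by simp
    then have "pos M z < pos M y"
      using inv pos_apply_Swap[OF assms(1-3) yz(1)] pos_apply_Swap[OF assms(1-3) yz(2)] pos_ab
        pos_eq_iff[OF yz(1) ab(1)] pos_eq_iff[OF yz(1) ab(2)]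
        pos_eq_iff[OF yz(2) ab(1)] pos_eq_iff[OF yz(2) ab(2)]
      by (auto simp: inversions_def split: if_splits)
    then show ?thesis
      using inv by (simp add: inversions_def)
    qed simp
  qed
  moreover have "?swapped \<subseteq> {(?a, ?b)} \<or> ?swapped \<subseteq> {(?b, ?a)}"
    by (auto simp: doubleton_eq_iff)
  then have "finite ?swapped" "card ?swapped \<le> 1"
    using card_mono[of "{_}" ?swapped] finite_subset[of ?swapped "{_}"] by auto
  ultimately have "card (inversions L (apply_action M (Swap j))) \<le> card (inversions L M \<union> ?swapped)"
    by (intro card_mono) (simp_all add: finite_inversions)
  also have "\<dots> \<le> card (inversions L M) + 1"
    using card_Un_le[of "inversions L M" ?swapped] \<open>card ?swapped \<le> 1\<close> by linarith
  finally show ?thesis .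
qed

lemma card_inversions_split:
  assumes "set M = set L" "x \<in> set L"
  shows "card (inversions L M) = card {(y, z) \<in> inversions L M. y \<noteq> x \<and> z \<noteq> x}
    + card (before L x - before M x) + card (before M x - before L x)"
proof -
  let ?N = "{(y, z) \<in> inversions L M. y \<noteq> x \<and> z \<noteq> x}"
  let ?A = "before L x" and ?B = "before M x"
  have pos_ne: "pos L y \<noteq> pos L x" "pos M y \<noteq> pos M x" if "y \<in> set L" "y \<noteq> x" for y
    using that assms pos_eq_iff[of y L x] pos_eq_iff[of y M x] by auto
  have split: "inversions L M = ?N \<union> ((\<lambda>y. (y, x)) ` (?A - ?B) \<union> (\<lambda>z. (x, z)) ` (?B - ?A))"
  proof (rule set_eqI)
    fix p :: "'a \<times> 'a"
    obtain y z where p: "p = (y, z)" by force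
    show "p \<in> inversions L M \<longleftrightarrow> p \<in> ?N \<union> ((\<lambda>y. (y, x)) ` (?A - ?B) \<union> (\<lambda>z. (x, z)) ` (?B - ?A))"
      unfolding p using pos_ne assms
      by (auto simp: before_def inversions_def; metis linorder_neqE_nat less_irrefl)
  qed
  have "finite ?N"
    by (rule finite_subset[OF _ finite_inversions]) auto
  moreover have "?N \<inter> ((\<lambda>y. (y, x)) ` (?A - ?B) \<union> (\<lambda>z. (x, z)) ` (?B - ?A)) = {}"
    "(\<lambda>y. (y, x)) ` (?A - ?B) \<inter> (\<lambda>z. (x, z)) ` (?B - ?A) = {}"
    by (auto simp: before_def)
  moreover have "card ((\<lambda>y. (y, x)) ` (?A - ?B)) = card (?A - ?B)"
    "card ((\<lambda>z. (x, z)) ` (?B - ?A)) = card (?B - ?A)"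
    by (simp_all add: card_image inj_on_def)
  ultimately show ?thesis
    unfolding arg_cong[OF split, of card] by (simp add: card_Un_disjoint before_def)
qed

lemma inversions_move_to_front_avoiding:
  assumes "distinct L" "x \<in> set L"
  shows "{(y, z) \<in> inversions (move_to_front x L) M. y \<noteq> x \<and> z \<noteq> x}
    = {(y, z) \<in> inversions L M. y \<noteq> x \<and> z \<noteq> x}"
proof -
  have "pos (move_to_front x L) y < pos (move_to_front x L) z \<longleftrightarrow> pos L y < pos L z"
    if "y \<in> set L" "z \<in> set L" "y \<noteq> x" "z \<noteq> x" for y z
    using that pos_move_to_front[OF assms, of y] pos_move_to_front[OF assms, of z]
      pos_eq_iff[OF _ assms(2), of y] pos_eq_iff[OF _ assms(2), of z] by auto
  then show ?thesis
    using set_move_to_front[OF assms(2)] by (auto simp: inversions_def)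
qed

lemma before_move_to_front_self: "before (move_to_front x L) x = {}"
  by (simp add: before_def pos_move_to_front_self)

lemma card_inversions_move_to_front:
  assumes "distinct L" "set M = set L" "x \<in> set L"
  shows "card (inversions (move_to_front x L) M) + card (before L x)
    = card (inversions L M) + 2 * card (before L x \<inter> before M x)"
proof -
  let ?A = "before L x" and ?B = "before M x"
  have "finite ?A" "finite ?B"
    by (simp_all add: before_def)
  then have "card (?A - ?B) = card ?A - card (?A \<inter> ?B)" "card (?B - ?A) = card ?B - card (?A \<inter> ?B)"
    "card (?A \<inter> ?B) \<le> card ?A" "card (?A \<inter> ?B) \<le> card ?B"
    by (simp_all add: card_Diff_subset_Int Int_commute card_mono)
  then show ?thesis
    using card_inversions_split[OF assms(2,3)]
      card_inversions_split[of M "move_to_front x L" x] assms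
    by (simp add: inversions_move_to_front_avoiding before_move_to_front_self set_move_to_front)
qed

section \<open>A doubling inequality\<close>

definition amortized_bound :: "real \<Rightarrow> real \<Rightarrow> real" where
  "amortized_bound d i = min (8 * i) (10 * d - 2 * i)"

text \<open>Adding the bound for the largest position \<open>i\<close> of a doubling sequence to the envelope at \<open>i/2\<close>
  stays below the envelope at \<open>i\<close>; the last piece gives the factor 24.\<close>

definition doubling_envelope :: "real \<Rightarrow> real \<Rightarrow> real" where
  "doubling_envelope d y = min (min (16 * y) (10 * d + 6 * y)) (min (20 * d + y) (24 * d))"

lemma doubling_envelope_mono: "y \<le> y' \<Longrightarrow> doubling_envelope d y \<le> doubling_envelope d y'"
  unfolding doubling_envelope_def by (intro min.mono) auto

lemma amortized_bound_add_envelope_half: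
  assumes "0 \<le> d" "0 \<le> i"
  shows "amortized_bound d i + doubling_envelope d (i / 2) \<le> doubling_envelope d i"
proof -
  have "amortized_bound d i \<le> 8 * i" "amortized_bound d i \<le> 10 * d - 2 * i"
    by (auto simp: amortized_bound_def)
  moreover have "doubling_envelope d (i / 2) \<le> 8 * i" "doubling_envelope d (i / 2) \<le> 10 * d + 3 * i"
    "doubling_envelope d (i / 2) \<le> 20 * d + i / 2"
    by (auto simp: doubling_envelope_def)
  ultimately have "amortized_bound d i + doubling_envelope d (i / 2) \<le> 16 * i"
    "amortized_bound d i + doubling_envelope d (i / 2) \<le> 10 * d + 6 * i"
    "amortized_bound d i + doubling_envelope d (i / 2) \<le> 20 * d + i"
    "amortized_bound d i + doubling_envelope d (i / 2) \<le> 24 * d"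
    by linarith+
  then show ?thesis
    by (simp add: doubling_envelope_def)
qed

lemma amortized_bound_le_add:
  assumes "p \<le> d + \<delta>" "0 \<le> \<delta>"
  shows "amortized_bound p i \<le> amortized_bound d i + 10 * \<delta>"
  using assms by (auto simp: amortized_bound_def min_def)

lemma sum_amortized_bound_le_envelope:
  fixes E :: "'b::linorder set" and I :: "'b \<Rightarrow> real"
  assumes "finite E" "0 \<le> d"
    and "\<And>e e'. e \<in> E \<Longrightarrow> e' \<in> E \<Longrightarrow> e < e' \<Longrightarrow> 2 * I e \<le> I e'"
    and "\<And>e. e \<in> E \<Longrightarrow> 0 \<le> I e" "\<And>e. e \<in> E \<Longrightarrow> I e \<le> y" "0 \<le> y"
  shows "(\<Sum>e\<in>E. amortized_bound d (I e)) \<le> doubling_envelope d y"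
  using assms(1,3-6)
proof (induction E arbitrary: y rule: finite_linorder_max_induct)
  case empty
  then show ?case
    using \<open>0 \<le> d\<close> by (simp add: doubling_envelope_def)
next
  case (insert b E)
  have "(\<Sum>e\<in>E. amortized_bound d (I e)) \<le> doubling_envelope d (I b / 2)"
  proof (rule insert.IH)
    show "2 * I e \<le> I e'" if "e \<in> E" "e' \<in> E" "e < e'" for e e'
      using that insert.prems(1) by simp
    show "0 \<le> I e" if "e \<in> E" for e
      using that insert.prems(2) by simp
    show "I e \<le> I b / 2" if "e \<in> E" for e
      using that insert.hyps(2) insert.prems(1)[of e b] by simp
    show "0 \<le> I b / 2"
      using insert.prems(2) by simp
  qed
  then have "(\<Sum>e\<in>insert b E. amortized_bound d (I e)) \<le> amortized_bound d (I b) + doubling_envelope d (I b / 2)"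
    using insert.hyps by (subst sum.insert) auto
  also have "\<dots> \<le> doubling_envelope d (I b)"
    using amortized_bound_add_envelope_half \<open>0 \<le> d\<close> insert.prems by simp
  also have "\<dots> \<le> doubling_envelope d y"
    using doubling_envelope_mono insert.prems by simp
  finally show ?case .
qed

lemma sum_amortized_bound_doubling:
  fixes E :: "'b::linorder set" and I :: "'b \<Rightarrow> real"
  assumes "finite E" "0 \<le> d"
    and "\<And>e e'. e \<in> E \<Longrightarrow> e' \<in> E \<Longrightarrow> e < e' \<Longrightarrow> 2 * I e \<le> I e'"
    and "\<And>e. e \<in> E \<Longrightarrow> 0 \<le> I e"
  shows "(\<Sum>e\<in>E. amortized_bound d (I e)) \<le> 24 * d"
proof -
  have "I e \<le> sum I E" if "e \<in> E" for e
    using that assms(1,4) by (intro member_le_sum) auto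
  moreover have "0 \<le> sum I E"
    using assms(4) by (rule sum_nonneg)
  ultimately have "(\<Sum>e\<in>E. amortized_bound d (I e)) \<le> doubling_envelope d (sum I E)"
    using assms by (intro sum_amortized_bound_le_envelope) auto
  then show ?thesis
    by (simp add: doubling_envelope_def)
qed

section \<open>The run of ALG\<close>

definition pending :: "'a request list \<Rightarrow> nat set \<Rightarrow> real \<Rightarrow> nat set" where
  "pending rs served t = {k. k < length rs \<and> k \<notin> served \<and> arr (rs ! k) \<le> t}"

definition due :: "'a request list \<Rightarrow> nat set \<Rightarrow> real \<Rightarrow> nat set" where
  "due rs served t = {k \<in> pending rs served t. dl (rs ! k) = t}"

definition trigger_pos :: "'a request list \<Rightarrow> 'a list \<Rightarrow> nat set \<Rightarrow> real \<Rightarrow> nat" where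
  "trigger_pos rs L served t = Max ((\<lambda>k. pos L (elem (rs ! k))) ` due rs served t)"

lemma finite_due: "finite (due rs served t)"
  by (simp add: due_def pending_def)

lemma alg_step_eq:
  "alg_step rs (L, served, c) t =
    (if due rs served t = {} then (L, served, c)
     else let i = trigger_pos rs L served t; j = min (2 * i - 1) (length L)
          in (move_to_front (L ! (i - 1)) L,
              served \<union> {k \<in> pending rs served t. pos L (elem (rs ! k)) \<le> j},
              c + j + (i - 1)))"
  unfolding alg_step_def Let_def case_prod_conv pending_def[symmetric] due_def[symmetric]
    trigger_pos_def[symmetric] by (rule refl)

locale alg_run =
  fixes L0 :: "'a list" and rs :: "'a request list"
  assumes distinct_L0: "distinct L0"
    and requests_in_L0: "\<forall>r \<in> set rs. elem r \<in> set L0"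
begin

definition phases :: nat where
  "phases = length (deadlines rs)"

definition phase_time :: "nat \<Rightarrow> real" where
  "phase_time e = deadlines rs ! e"

definition alg_state :: "nat \<Rightarrow> 'a list \<times> nat set \<times> nat" where
  "alg_state e = foldl (alg_step rs) (L0, {}, 0) (take e (deadlines rs))"

definition alg_list :: "nat \<Rightarrow> 'a list" where
  "alg_list e = fst (alg_state e)"

definition alg_served :: "nat \<Rightarrow> nat set" where
  "alg_served e = fst (snd (alg_state e))"

definition alg_cost :: "nat \<Rightarrow> nat" where
  "alg_cost e = snd (snd (alg_state e))"

definition is_trigger :: "nat \<Rightarrow> bool" where
  "is_trigger e \<longleftrightarrow> due rs (alg_served e) (phase_time e) \<noteq> {}"

definition trig_pos :: "nat \<Rightarrow> nat" where
  "trig_pos e = trigger_pos rs (alg_list e) (alg_served e) (phase_time e)"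

definition trig_elem :: "nat \<Rightarrow> 'a" where
  "trig_elem e = alg_list e ! (trig_pos e - 1)"

definition access_len :: "nat \<Rightarrow> nat" where
  "access_len e = min (2 * trig_pos e - 1) (length (alg_list e))"

definition trig_req :: "nat \<Rightarrow> nat" where
  "trig_req e = (SOME k. k \<in> due rs (alg_served e) (phase_time e)
                         \<and> pos (alg_list e) (elem (rs ! k)) = trig_pos e)"

lemma elem_in_L0: "k < length rs \<Longrightarrow> elem (rs ! k) \<in> set L0"
  using requests_in_L0 nth_mem by blast

lemma ALG_eq_alg_cost: "ALG L0 rs = alg_cost phases"
  by (simp add: ALG_def alg_cost_def alg_state_def phases_def)

lemma alg_state_eq: "alg_state e = (alg_list e, alg_served e, alg_cost e)"
  by (simp add: alg_list_def alg_served_def alg_cost_def)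

lemma alg_state_0: "alg_state 0 = (L0, {}, 0)"
  by (simp add: alg_state_def)

lemma alg_state_Suc: "e < phases \<Longrightarrow> alg_state (Suc e) = alg_step rs (alg_state e) (phase_time e)"
  by (simp add: alg_state_def phases_def phase_time_def take_Suc_conv_app_nth)

lemma alg_state_Suc_idle: "e < phases \<Longrightarrow> \<not> is_trigger e \<Longrightarrow> alg_state (Suc e) = alg_state e"
  using alg_state_Suc[of e] alg_state_eq[of e] by (simp add: alg_step_eq is_trigger_def)

lemma alg_state_Suc_trigger:
  assumes "e < phases" "is_trigger e"
  shows "alg_state (Suc e) =
    (move_to_front (trig_elem e) (alg_list e),
     alg_served e \<union> {k \<in> pending rs (alg_served e) (phase_time e). pos (alg_list e) (elem (rs ! k)) \<le> access_len e},
     alg_cost e + access_len e + (trig_pos e - 1))"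
  using alg_state_Suc[OF assms(1)] alg_state_eq[of e] assms(2)
  by (simp add: alg_step_eq is_trigger_def trig_elem_def trig_pos_def access_len_def Let_def)

lemma alg_list_Suc_trigger:
  "e < phases \<Longrightarrow> is_trigger e \<Longrightarrow> alg_list (Suc e) = move_to_front (trig_elem e) (alg_list e)"
  using alg_state_Suc_trigger by (simp add: alg_list_def)

lemma alg_served_Suc_trigger:
  "e < phases \<Longrightarrow> is_trigger e \<Longrightarrow> alg_served (Suc e) = alg_served e
     \<union> {k \<in> pending rs (alg_served e) (phase_time e). pos (alg_list e) (elem (rs ! k)) \<le> access_len e}"
  using alg_state_Suc_trigger by (simp add: alg_served_def)

lemma alg_cost_Suc_trigger:
  "e < phases \<Longrightarrow> is_trigger e \<Longrightarrow> alg_cost (Suc e) = alg_cost e + access_len e + (trig_pos e - 1)"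
  using alg_state_Suc_trigger by (simp add: alg_cost_def)

lemma phase_time_strict_mono: "e < e' \<Longrightarrow> e' < phases \<Longrightarrow> phase_time e < phase_time e'"
  using strict_sorted_list_of_set[of "dl ` set rs"]
  by (simp add: phase_time_def phases_def deadlines_def sorted_wrt_iff_nth_less)

lemma phase_time_mono: "e \<le> e' \<Longrightarrow> e' < phases \<Longrightarrow> phase_time e \<le> phase_time e'"
  using phase_time_strict_mono[of e e'] by (cases "e = e'") auto

lemma alg_served_subset_Suc: "e < phases \<Longrightarrow> alg_served e \<subseteq> alg_served (Suc e)"
  using alg_served_Suc_trigger[of e] alg_state_Suc_idle[of e]
  by (cases "is_trigger e") (auto simp: alg_served_def)

lemma alg_served_mono:
  assumes "e \<le> e'" "e' \<le> phases"
  shows "alg_served e \<subseteq> alg_served e'"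
  using assms
proof (induction e' rule: dec_induct)
  case (step m)
  then show ?case
    using alg_served_subset_Suc[of m] by simp
qed simp

lemma trig_req_spec:
  assumes "is_trigger e"
  shows "trig_req e \<in> due rs (alg_served e) (phase_time e)"
    and "pos (alg_list e) (elem (rs ! trig_req e)) = trig_pos e"
proof -
  have "trig_pos e \<in> (\<lambda>k. pos (alg_list e) (elem (rs ! k))) ` due rs (alg_served e) (phase_time e)"
    using assms unfolding trig_pos_def trigger_pos_def is_trigger_def
    by (intro Max_in finite_imageI finite_due) simp
  then have "\<exists>k. k \<in> due rs (alg_served e) (phase_time e) \<and> pos (alg_list e) (elem (rs ! k)) = trig_pos e"
    by (metis (no_types, lifting) imageE)
  from someI_ex[OF this] show "trig_req e \<in> due rs (alg_served e) (phase_time e)"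
    and "pos (alg_list e) (elem (rs ! trig_req e)) = trig_pos e"
    unfolding trig_req_def by blast+
qed

lemma trig_elem_eq_if_set_alg_list:
  assumes "is_trigger e" "set (alg_list e) = set L0"
  shows "trig_elem e = elem (rs ! trig_req e)"
proof -
  have "elem (rs ! trig_req e) \<in> set (alg_list e)"
    using trig_req_spec(1)[OF assms(1)] assms(2) elem_in_L0 by (simp add: due_def pending_def)
  then show ?thesis
    using nth_pos trig_req_spec(2)[OF assms(1)] by (metis trig_elem_def)
qed

lemma alg_list_invariant: "e \<le> phases \<Longrightarrow> distinct (alg_list e) \<and> set (alg_list e) = set L0"
proof (induction e)
  case 0
  then show ?case
    using alg_state_0 alg_state_eq[of 0] distinct_L0 by simp
next
  case (Suc e)
  then have IH: "distinct (alg_list e)" "set (alg_list e) = set L0" and e: "e < phases"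
    by auto
  show ?case
  proof (cases "is_trigger e")
    case False
    then show ?thesis
      using alg_state_Suc_idle[OF e] alg_state_eq[of e] alg_state_eq[of "Suc e"] IH by simp
  next
    case True
    then have "trig_elem e \<in> set (alg_list e)"
      using trig_elem_eq_if_set_alg_list[OF True IH(2)] trig_req_spec(1)[OF True] elem_in_L0 IH(2)
      by (simp add: due_def pending_def)
    then show ?thesis
      using alg_list_Suc_trigger[OF e True] IH set_move_to_front[OF \<open>trig_elem e \<in> set (alg_list e)\<close>]
        distinct_move_to_front[OF IH(1)] by simp
  qed
qed

lemma distinct_alg_list: "e \<le> phases \<Longrightarrow> distinct (alg_list e)"
  using alg_list_invariant by simp

lemma set_alg_list: "e \<le> phases \<Longrightarrow> set (alg_list e) = set L0"
  using alg_list_invariant by simp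

lemma length_alg_list: "e \<le> phases \<Longrightarrow> length (alg_list e) = length L0"
  using alg_list_invariant distinct_L0 by (metis distinct_card)

context
  fixes e assumes phase: "e < phases" and trigger: "is_trigger e"
begin

lemma trig_req_less: "trig_req e < length rs"
  and trig_req_not_served: "trig_req e \<notin> alg_served e"
  and dl_trig_req: "dl (rs ! trig_req e) = phase_time e"
  using trig_req_spec(1)[OF trigger] by (auto simp: due_def pending_def)

lemma trig_elem_eq: "trig_elem e = elem (rs ! trig_req e)"
  using trig_elem_eq_if_set_alg_list[OF trigger set_alg_list] phase by simp

lemma trig_elem_in_L0: "trig_elem e \<in> set L0"
  using trig_elem_eq elem_in_L0[OF trig_req_less] by simp

lemma pos_trig_elem: "pos (alg_list e) (trig_elem e) = trig_pos e"
  using trig_req_spec(2)[OF trigger] trig_elem_eq by simp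

lemma access_len_eq: "access_len e = min (2 * trig_pos e - 1) (length L0)"
  using length_alg_list[of e] phase by (simp add: access_len_def)

lemma unserved_beyond_access:
  assumes "e < e'" "e' \<le> phases" "k < length rs" "arr (rs ! k) \<le> phase_time e" "k \<notin> alg_served e'"
  shows "2 * trig_pos e \<le> pos (alg_list e) (elem (rs ! k))"
proof -
  have "k \<notin> alg_served (Suc e)" "k \<in> pending rs (alg_served e) (phase_time e)"
    using alg_served_mono[of "Suc e" e'] alg_served_mono[of e e'] assms by (auto simp: pending_def)
  then have "access_len e < pos (alg_list e) (elem (rs ! k))"
    using alg_served_Suc_trigger[OF phase trigger] by auto
  moreover have "pos (alg_list e) (elem (rs ! k)) \<le> length L0"
    using pos_le_length elem_in_L0[OF assms(3)] set_alg_list[of e] length_alg_list[of e] phase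
    by (metis less_imp_le_nat)
  ultimately show ?thesis
    using access_len_eq by simp
qed

lemma unserved_ne_trig_elem:
  assumes "e < e'" "e' \<le> phases" "k < length rs" "arr (rs ! k) \<le> phase_time e" "k \<notin> alg_served e'"
  shows "elem (rs ! k) \<noteq> trig_elem e"
  using unserved_beyond_access[OF assms] pos_trig_elem pos_ge_1[of "alg_list e" "trig_elem e"] by auto

end

lemma pos_unserved_mono:
  assumes "e \<le> e1" "e1 \<le> e'" "e' \<le> phases"
    and "k < length rs" "arr (rs ! k) \<le> phase_time e" "k \<notin> alg_served e'"
  shows "pos (alg_list e) (elem (rs ! k)) \<le> pos (alg_list e1) (elem (rs ! k))"
  using assms(1,2)
proof (induction e1 rule: dec_induct)
  case (step m)
  then have m: "m < phases" "m < e'"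
    using assms(3) by auto
  have "pos (alg_list m) (elem (rs ! k)) \<le> pos (alg_list (Suc m)) (elem (rs ! k))"
  proof (cases "is_trigger m")
    case False
    then show ?thesis
      using alg_state_Suc_idle[OF m(1)] by (simp add: alg_list_def)
  next
    case True
    have "arr (rs ! k) \<le> phase_time m"
      using assms(5) phase_time_mono[of e m] step.hyps(1) m(1) by simp
    then have "elem (rs ! k) \<noteq> trig_elem m"
      using unserved_ne_trig_elem[OF m(1) True m(2) assms(3,4) _ assms(6)] by simp
    then show ?thesis
      using alg_list_Suc_trigger[OF m(1) True] pos_move_to_front[of "alg_list m" "trig_elem m"]
        distinct_alg_list[of m] set_alg_list[of m] m(1) trig_elem_in_L0[OF m(1) True] elem_in_L0[OF assms(4)]
      by simp
  qed
  with step.IH step.prems show ?case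
    by simp
qed simp

lemma trig_pos_doubling:
  assumes "e < e'" "e' < phases" "is_trigger e" "is_trigger e'"
    and "arr (rs ! trig_req e') \<le> phase_time e"
  shows "2 * trig_pos e \<le> trig_pos e'"
proof -
  have e: "e < phases"
    using assms by simp
  have "2 * trig_pos e \<le> pos (alg_list e) (elem (rs ! trig_req e'))"
    using unserved_beyond_access[OF e assms(3,1)] assms trig_req_less trig_req_not_served by simp
  also have "\<dots> \<le> pos (alg_list e') (elem (rs ! trig_req e'))"
    using pos_unserved_mono[of e e' e' "trig_req e'"] assms trig_req_less trig_req_not_served by simp
  also have "\<dots> = trig_pos e'"
    using pos_trig_elem[OF assms(2,4)] trig_elem_eq[OF assms(2,4)] by simp
  finally show ?thesis .
qed

lemma trig_windows_disjoint:
  assumes "e < e'" "e' < phases" "is_trigger e" "is_trigger e'" "trig_elem e = trig_elem e'"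
  shows "phase_time e < arr (rs ! trig_req e')"
proof (rule ccontr)
  assume "\<not> phase_time e < arr (rs ! trig_req e')"
  then have "elem (rs ! trig_req e') \<noteq> trig_elem e"
    using unserved_ne_trig_elem[of e e' "trig_req e'"] assms trig_req_less trig_req_not_served by simp
  then show False
    using assms(5) trig_elem_eq[OF assms(2,4)] by simp
qed

end

section \<open>A feasible schedule\<close>

lemma less_length_takeWhile_sorted_iff:
  assumes "sorted (map f xs)"
  shows "r < length (takeWhile (\<lambda>x. f x \<le> t) xs) \<longleftrightarrow> r < length xs \<and> f (xs ! r) \<le> t"
proof
  assume r: "r < length (takeWhile (\<lambda>x. f x \<le> t) xs)"
  then show "r < length xs \<and> f (xs ! r) \<le> t"
    using length_takeWhile_le[of _ xs] nth_mem[OF r] set_takeWhileD takeWhile_nth[OF r]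
    by (metis (mono_tags, lifting) order.strict_trans2)
next
  assume r: "r < length xs \<and> f (xs ! r) \<le> t"
  show "r < length (takeWhile (\<lambda>x. f x \<le> t) xs)"
  proof (rule ccontr)
    let ?m = "length (takeWhile (\<lambda>x. f x \<le> t) xs)"
    assume "\<not> r < ?m"
    then have "?m < length xs" "f (xs ! ?m) \<le> f (xs ! r)"
      using r assms by (auto simp: sorted_iff_nth_mono)
    then show False
      using r nth_length_takeWhile[of "\<lambda>x. f x \<le> t" xs] order.trans by blast
  qed
qed

locale alg_vs_schedule = alg_run +
  fixes S :: schedule
  assumes feasible_S: "feasible L0 rs S"
begin

definition sched_list :: "nat \<Rightarrow> 'a list" where
  "sched_list q = state_before L0 S q"

definition is_swap :: "nat \<Rightarrow> bool" where
  "is_swap q \<longleftrightarrow> q < length S \<and> (\<exists>j. snd (S ! q) = Swap j)"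

definition swaps_before :: "nat \<Rightarrow> nat" where
  "swaps_before q = card {r. r < q \<and> is_swap r}"

definition moves_back :: "nat \<Rightarrow> 'a \<Rightarrow> bool" where
  "moves_back q x \<longleftrightarrow> q < length S \<and> (\<exists>j. snd (S ! q) = Swap j \<and> sched_list q ! (j - 1) = x)"

definition access_depth :: "nat \<Rightarrow> nat" where
  "access_depth q = (case snd (S ! q) of Access i \<Rightarrow> i | Swap _ \<Rightarrow> 0)"

definition events_until :: "nat \<Rightarrow> nat" where
  "events_until e = length (takeWhile (\<lambda>ev. fst ev \<le> phase_time e) S)"

definition serving_access :: "nat \<Rightarrow> nat" where
  "serving_access e = (SOME q. q < length S \<and> (\<exists>i. snd (S ! q) = Access i \<and>
     arr (rs ! trig_req e) \<le> fst (S ! q) \<and> fst (S ! q) \<le> dl (rs ! trig_req e) \<and>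
     pos (sched_list q) (elem (rs ! trig_req e)) \<le> i))"

lemma sorted_schedule: "sorted (map fst S)"
  using feasible_S by (simp add: feasible_def)

lemma valid_schedule_action: "q < length S \<Longrightarrow> valid_action (length L0) (snd (S ! q))"
  using feasible_S nth_mem by (fastforce simp: feasible_def)

lemma sched_list_0: "sched_list 0 = L0"
  by (simp add: sched_list_def state_before_def)

lemma sched_list_Suc: "q < length S \<Longrightarrow> sched_list (Suc q) = apply_action (sched_list q) (snd (S ! q))"
  by (simp add: sched_list_def state_before_def take_Suc_conv_app_nth)

lemma sched_list_Suc_beyond: "length S \<le> q \<Longrightarrow> sched_list (Suc q) = sched_list q"
  by (simp add: sched_list_def state_before_def)

lemma sched_list_Suc_Swap:
  assumes "q < length S" "snd (S ! q) = Swap j"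
  shows "sched_list (Suc q) = apply_action (sched_list q) (Swap j)" "1 \<le> j" "j < length L0"
  using sched_list_Suc[OF assms(1)] valid_schedule_action[OF assms(1)] assms(2) by auto

lemma sched_list_Suc_not_swap:
  assumes "\<not> is_swap q"
  shows "sched_list (Suc q) = sched_list q"
proof (cases "q < length S")
  case True
  with assms obtain i where "snd (S ! q) = Access i"
    by (cases "snd (S ! q)") (auto simp: is_swap_def)
  then show ?thesis
    using sched_list_Suc[OF True] by simp
qed (simp add: sched_list_Suc_beyond)

lemma sched_list_invariant: "distinct (sched_list q) \<and> set (sched_list q) = set L0 \<and> length (sched_list q) = length L0"
proof (induction q)
  case 0
  then show ?case
    using sched_list_0 distinct_L0 by simp
next
  case (Suc q)
  show ?case
  proof (cases "is_swap q")
    case True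
    then obtain j where "q < length S" "snd (S ! q) = Swap j"
      by (auto simp: is_swap_def)
    then show ?thesis
      using sched_list_Suc_Swap Suc.IH by (simp add: set_apply_Swap distinct_apply_Swap del: apply_action.simps)
  next
    case False
    then show ?thesis
      using sched_list_Suc_not_swap Suc.IH by simp
  qed
qed

lemma swaps_before_Suc: "swaps_before (Suc q) = swaps_before q + (if is_swap q then 1 else 0)"
proof -
  have "{r. r < Suc q \<and> is_swap r} = {r. r < q \<and> is_swap r} \<union> (if is_swap q then {q} else {})"
    by (auto simp: less_Suc_eq)
  then show ?thesis
    by (simp add: swaps_before_def)
qed

lemma swaps_before_le: "swaps_before q \<le> swaps_before (length S)"
  unfolding swaps_before_def by (rule card_mono) (auto simp: is_swap_def)

lemma card_inversions_sched_list_Suc: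
  assumes "set L = set L0"
  shows "card (inversions L (sched_list (Suc q))) \<le> card (inversions L (sched_list q)) + (if is_swap q then 1 else 0)"
proof (cases "is_swap q")
  case True
  then obtain j where "q < length S" "snd (S ! q) = Swap j"
    by (auto simp: is_swap_def)
  then show ?thesis
    using sched_list_Suc_Swap card_inversions_Swap_le[of "sched_list q" j L] sched_list_invariant[of q] assms True
    by simp
qed (simp add: sched_list_Suc_not_swap)

lemma card_inversions_sched_list_mono:
  assumes "set L = set L0" "q \<le> q'"
  shows "card (inversions L (sched_list q')) + swaps_before q \<le> card (inversions L (sched_list q)) + swaps_before q'"
  using assms(2)
proof (induction q' rule: dec_induct)
  case (step m)
  then show ?case
    using card_inversions_sched_list_Suc[OF assms(1), of m] swaps_before_Suc[of m] by simp
qed simp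

lemma pos_sched_list_Suc:
  assumes "x \<in> set L0"
  shows "pos (sched_list (Suc q)) x \<le> pos (sched_list q) x + (if moves_back q x then 1 else 0)"
proof (cases "is_swap q")
  case True
  then obtain j where q: "q < length S" "snd (S ! q) = Swap j"
    by (auto simp: is_swap_def)
  let ?M = "sched_list q"
  have M: "distinct ?M" "length ?M = length L0" "x \<in> set ?M"
    using sched_list_invariant[of q] assms by auto
  have "pos ?M (?M ! (j - 1)) = j" "pos ?M (?M ! j) = j + 1"
    using pos_nth[OF M(1), of "j - 1"] pos_nth[OF M(1), of j] sched_list_Suc_Swap[OF q] M(2) by simp_all
  then show ?thesis
    using sched_list_Suc_Swap[OF q] pos_apply_Swap[OF M(1) _ _ M(3), of j] M(2) q
    by (auto simp: moves_back_def)
qed (simp add: sched_list_Suc_not_swap)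

lemma pos_sched_list_mono:
  assumes "x \<in> set L0" "q \<le> q'"
  shows "pos (sched_list q') x \<le> pos (sched_list q) x + card {r. q \<le> r \<and> r < q' \<and> moves_back r x}"
  using assms(2)
proof (induction q' rule: dec_induct)
  case (step m)
  have "{r. q \<le> r \<and> r < Suc m \<and> moves_back r x}
      = {r. q \<le> r \<and> r < m \<and> moves_back r x} \<union> (if moves_back m x then {m} else {})"
    using step.hyps(1) by (auto simp: less_Suc_eq)
  then have "card {r. q \<le> r \<and> r < Suc m \<and> moves_back r x}
      = card {r. q \<le> r \<and> r < m \<and> moves_back r x} + (if moves_back m x then 1 else 0)"
    by simp
  then show ?case
    using step.IH pos_sched_list_Suc[OF assms(1), of m] by simp
qed simp

lemma less_events_until_iff: "q < events_until e \<longleftrightarrow> q < length S \<and> fst (S ! q) \<le> phase_time e"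
  unfolding events_until_def using less_length_takeWhile_sorted_iff[OF sorted_schedule] by simp

lemma events_until_mono:
  assumes "e \<le> e'" "e' < phases"
  shows "events_until e \<le> events_until e'"
  using less_events_until_iff[of _ e] less_events_until_iff[of _ e'] phase_time_mono[OF assms]
  by (meson leI order.trans less_irrefl)

context
  fixes e assumes phase: "e < phases" and trigger: "is_trigger e"
begin

lemma serving_access_spec:
  "serving_access e < length S \<and> (\<exists>i. snd (S ! serving_access e) = Access i \<and>
     arr (rs ! trig_req e) \<le> fst (S ! serving_access e) \<and> fst (S ! serving_access e) \<le> dl (rs ! trig_req e) \<and>
     pos (sched_list (serving_access e)) (elem (rs ! trig_req e)) \<le> i)"
proof -
  have "\<exists>q. q < length S \<and> (\<exists>i. snd (S ! q) = Access i \<and>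
     arr (rs ! trig_req e) \<le> fst (S ! q) \<and> fst (S ! q) \<le> dl (rs ! trig_req e) \<and>
     pos (sched_list q) (elem (rs ! trig_req e)) \<le> i)"
    using feasible_S trig_req_less[OF phase trigger] by (simp add: feasible_def sched_list_def)
  then show ?thesis
    unfolding serving_access_def by (rule someI_ex)
qed

lemma serving_access_less: "serving_access e < length S"
  using serving_access_spec by simp

lemma arr_le_serving_time: "arr (rs ! trig_req e) \<le> fst (S ! serving_access e)"
  using serving_access_spec by blast

lemma serving_time_le: "fst (S ! serving_access e) \<le> phase_time e"
  using serving_access_spec dl_trig_req[OF phase trigger] by auto

lemma pos_trig_elem_le_access_depth:
  "pos (sched_list (serving_access e)) (trig_elem e) \<le> access_depth (serving_access e)"
  using serving_access_spec trig_elem_eq[OF phase trigger] by (auto simp: access_depth_def)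

lemma serving_access_less_events_until: "serving_access e < events_until e"
  using less_events_until_iff serving_access_less serving_time_le by simp

end

section \<open>The potential function\<close>

definition charge :: "nat \<Rightarrow> real" where
  "charge e = (if is_trigger e
     then amortized_bound (pos (sched_list (events_until e)) (trig_elem e)) (trig_pos e) else 0)"

definition events_before_phase :: "nat \<Rightarrow> nat" where
  "events_before_phase e = (if e = 0 then 0 else events_until (e - 1))"

lemma amortized_step:
  assumes e: "e < phases"
  defines "M \<equiv> sched_list (events_until e)"
  shows "alg_cost (Suc e) + 5 * card (inversions (alg_list (Suc e)) M)
    \<le> alg_cost e + 5 * card (inversions (alg_list e) M) + charge e"
proof (cases "is_trigger e")
  case False
  then show ?thesis
    using alg_state_Suc_idle[OF e] alg_state_eq[of e] alg_state_eq[of "Suc e"] by (simp add: charge_def)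
next
  case True
  define L x where "L = alg_list e" and "x = trig_elem e"
  define i p k where "i = trig_pos e" and "p = pos M x" and "k = card (before L x \<inter> before M x)"
  have L: "distinct L" "set L = set L0" "x \<in> set L"
    using distinct_alg_list set_alg_list e trig_elem_in_L0[OF e True] by (simp_all add: L_def x_def)
  have M: "distinct M" "set M = set L0" "x \<in> set M"
    using sched_list_invariant L by (simp_all add: M_def)
  have before_L: "card (before L x) = i - 1" and before_M: "card (before M x) = p - 1"
    using card_before[OF L(1,3)] card_before[OF M(1,3)] pos_trig_elem[OF e True]
    by (simp_all add: L_def x_def i_def p_def)
  have i: "1 \<le> i"
    using pos_ge_1[of L x] pos_trig_elem[OF e True] by (simp add: i_def L_def x_def)
  have p: "1 \<le> p"
    unfolding p_def by (rule pos_ge_1)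
  have k: "k \<le> i - 1" "k \<le> p - 1"
    using before_L before_M card_mono[of "before L x"] card_mono[of "before M x"]
    by (auto simp: k_def before_def)
  have inv: "card (inversions (alg_list (Suc e)) M) + (i - 1) = card (inversions L M) + 2 * k"
    using card_inversions_move_to_front[OF L(1) _ L(3), of M] M(2) L(2) before_L
      alg_list_Suc_trigger[OF e True] by (simp add: L_def x_def k_def)
  have cost: "alg_cost (Suc e) + 1 = alg_cost e + access_len e + i" "access_len e + 1 \<le> 2 * i"
    using alg_cost_Suc_trigger[OF e True] i by (auto simp: i_def access_len_def)
  have "real (alg_cost (Suc e)) + 5 * card (inversions (alg_list (Suc e)) M)
      \<le> alg_cost e + 5 * card (inversions L M) + min (8 * real i) (10 * real p - 2 * real i)"
    using inv cost k i p by (simp add: min_def, linarith)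
  then show ?thesis
    using True by (simp add: charge_def amortized_bound_def L_def x_def i_def p_def M_def)
qed

text \<open>The list of \<open>S\<close> is taken at the previous deadline; in the step to the next phase, \<open>S\<close> first
  catches up to the new deadline and then ALG acts.\<close>

lemma potential_bound:
  "e \<le> phases \<Longrightarrow> alg_cost e + 5 * card (inversions (alg_list e) (sched_list (events_before_phase e)))
     \<le> (\<Sum>e' < e. charge e') + 5 * swaps_before (events_before_phase e)"
proof (induction e)
  case 0
  then show ?case
    using alg_state_0 alg_state_eq[of 0] by (simp add: events_before_phase_def sched_list_0 inversions_self)
next
  case (Suc e)
  then have e: "e < phases"
    by simp
  have "events_before_phase e \<le> events_until e"
    using events_until_mono[of "e - 1" e] e by (simp add: events_before_phase_def)
  then have "card (inversions (alg_list e) (sched_list (events_until e))) + swaps_before (events_before_phase e)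
      \<le> card (inversions (alg_list e) (sched_list (events_before_phase e))) + swaps_before (events_until e)"
    using card_inversions_sched_list_mono set_alg_list e by simp
  then have "real (card (inversions (alg_list e) (sched_list (events_until e)))) + swaps_before (events_before_phase e)
      \<le> card (inversions (alg_list e) (sched_list (events_before_phase e))) + swaps_before (events_until e)"
    by linarith
  moreover have "events_before_phase (Suc e) = events_until e"
    by (simp add: events_before_phase_def)
  ultimately show ?case
    using amortized_step[OF e] Suc e by simp
qed

lemma ALG_le_sum_charge: "ALG L0 rs \<le> (\<Sum>e < phases. charge e) + 5 * swaps_before (length S)"
  using potential_bound[of phases] swaps_before_le[of "events_before_phase phases"]
  by (simp add: ALG_eq_alg_cost)

section \<open>Charging the cost of the schedule\<close>

definition triggers :: "nat set" where
  "triggers = {e. e < phases \<and> is_trigger e}"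

definition displacement :: "nat \<Rightarrow> nat set" where
  "displacement e = {q. serving_access e \<le> q \<and> q < events_until e \<and> moves_back q (trig_elem e)}"

lemma finite_triggers: "finite triggers"
  by (simp add: triggers_def)

lemma sum_charge_eq: "(\<Sum>e < phases. charge e) = (\<Sum>e \<in> triggers. charge e)"
proof -
  have "(\<Sum>e \<in> triggers. charge e) = (\<Sum>e < phases. if is_trigger e then charge e else 0)"
    unfolding triggers_def by (simp add: sum.inter_filter[symmetric] Collect_conj_eq lessThan_def Int_commute)
  also have "\<dots> = (\<Sum>e < phases. charge e)"
    by (rule sum.cong) (auto simp: charge_def)
  finally show ?thesis ..
qed

lemma charge_le:
  assumes "e \<in> triggers"
  shows "charge e \<le> amortized_bound (access_depth (serving_access e)) (trig_pos e) + 10 * card (displacement e)"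
proof -
  have e: "e < phases" "is_trigger e"
    using assms by (auto simp: triggers_def)
  have "pos (sched_list (events_until e)) (trig_elem e)
      \<le> pos (sched_list (serving_access e)) (trig_elem e) + card (displacement e)"
    using pos_sched_list_mono[OF trig_elem_in_L0[OF e]] serving_access_less_events_until[OF e]
    by (simp add: displacement_def less_imp_le)
  also have "\<dots> \<le> access_depth (serving_access e) + card (displacement e)"
    using pos_trig_elem_le_access_depth[OF e] by simp
  finally show ?thesis
    using e amortized_bound_le_add by (simp add: charge_def)
qed

lemma displacement_disjoint:
  assumes "e \<in> triggers" "e' \<in> triggers" "e < e'"
  shows "displacement e \<inter> displacement e' = {}"
proof (rule ccontr)
  assume "displacement e \<inter> displacement e' \<noteq> {}"
  then obtain q where q: "q \<in> displacement e" "q \<in> displacement e'"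
    by blast
  have t: "e < phases" "is_trigger e" "e' < phases" "is_trigger e'"
    using assms by (auto simp: triggers_def)
  have "trig_elem e = trig_elem e'"
    using q by (auto simp: displacement_def moves_back_def)
  then have "phase_time e < arr (rs ! trig_req e')"
    using trig_windows_disjoint assms t by simp
  also have "\<dots> \<le> fst (S ! serving_access e')"
    using arr_le_serving_time[OF t(3,4)] .
  also have "\<dots> \<le> fst (S ! q)"
    using q sorted_nth_mono[OF sorted_schedule] less_events_until_iff[of q e]
    by (auto simp: displacement_def)
  also have "\<dots> \<le> phase_time e"
    using q less_events_until_iff[of q e] by (simp add: displacement_def)
  finally show False
    by simp
qed

lemma sum_card_displacement_le: "(\<Sum>e \<in> triggers. card (displacement e)) \<le> swaps_before (length S)"
proof -
  have "\<forall>e \<in> triggers. finite (displacement e)"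
    by (simp add: displacement_def)
  moreover have "\<forall>e \<in> triggers. \<forall>e' \<in> triggers. e \<noteq> e' \<longrightarrow> displacement e \<inter> displacement e' = {}"
    using displacement_disjoint by (metis Int_commute linorder_neqE_nat)
  ultimately have "(\<Sum>e \<in> triggers. card (displacement e)) = card (\<Union>e \<in> triggers. displacement e)"
    by (rule card_UN_disjoint[OF finite_triggers, symmetric])
  also have "\<dots> \<le> card {r. r < length S \<and> is_swap r}"
    by (rule card_mono) (auto simp: displacement_def moves_back_def is_swap_def)
  finally show ?thesis
    by (simp add: swaps_before_def)
qed

lemma sum_amortized_bound_le_depth:
  "(\<Sum>e \<in> triggers. amortized_bound (access_depth (serving_access e)) (trig_pos e))
     \<le> 24 * (\<Sum>q < length S. access_depth q)"
proof -
  let ?group = "\<lambda>q. {e \<in> triggers. serving_access e = q}"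
  have "serving_access ` triggers \<subseteq> {..<length S}"
    using serving_access_less by (auto simp: triggers_def)
  then have "(\<Sum>e \<in> triggers. amortized_bound (access_depth (serving_access e)) (trig_pos e))
      = (\<Sum>q < length S. \<Sum>e \<in> ?group q. amortized_bound (access_depth (serving_access e)) (trig_pos e))"
    using sum.group[OF finite_triggers finite_lessThan, where g = serving_access
        and h = "\<lambda>e. amortized_bound (access_depth (serving_access e)) (trig_pos e)"]
    by simp
  also have "\<dots> = (\<Sum>q < length S. \<Sum>e \<in> ?group q. amortized_bound (access_depth q) (trig_pos e))"
    by (intro sum.cong) auto
  also have "\<dots> \<le> (\<Sum>q < length S. 24 * real (access_depth q))"
  proof (rule sum_mono, rule sum_amortized_bound_doubling)
    fix q e e' assume "e \<in> ?group q" "e' \<in> ?group q" "e < e'"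
    then have t: "e < phases" "is_trigger e" "e' < phases" "is_trigger e'"
      and "serving_access e = q" "serving_access e' = q"
      by (auto simp: triggers_def)
    then have "arr (rs ! trig_req e') \<le> phase_time e"
      using arr_le_serving_time[OF t(3,4)] serving_time_le[OF t(1,2)] by simp
    then have "2 * trig_pos e \<le> trig_pos e'"
      using trig_pos_doubling \<open>e < e'\<close> t by simp
    then show "2 * real (trig_pos e) \<le> real (trig_pos e')"
      by linarith
  qed (simp_all add: finite_triggers)
  finally show ?thesis
    by (simp add: sum_distrib_left)
qed

lemma sched_cost_eq: "sched_cost S = (\<Sum>q < length S. access_depth q) + swaps_before (length S)"
proof -
  have "sched_cost S = (\<Sum>q < length S. access_depth q + (if is_swap q then 1 else 0))"
    unfolding sched_cost_def sum_list_sum_nth atLeast0LessThan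
    by (rule sum.cong) (auto simp: access_depth_def is_swap_def split: action.split)
  also have "\<dots> = (\<Sum>q < length S. access_depth q) + card {q \<in> {..<length S}. is_swap q}"
    by (simp add: sum.distrib sum.inter_filter[symmetric])
  also have "{q \<in> {..<length S}. is_swap q} = {q. q < length S \<and> is_swap q}"
    by auto
  finally show ?thesis
    by (simp add: swaps_before_def)
qed

theorem ALG_le_24_sched_cost: "ALG L0 rs \<le> 24 * sched_cost S"
proof -
  have displacements: "(\<Sum>e \<in> triggers. real (card (displacement e))) \<le> swaps_before (length S)"
    using sum_card_displacement_le by (metis of_nat_le_iff of_nat_sum)
  have "real (ALG L0 rs) \<le> (\<Sum>e \<in> triggers. charge e) + 5 * real (swaps_before (length S))"
    using ALG_le_sum_charge sum_charge_eq by simp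
  also have "\<dots> \<le> (\<Sum>e \<in> triggers. amortized_bound (access_depth (serving_access e)) (trig_pos e))
      + 10 * (\<Sum>e \<in> triggers. real (card (displacement e))) + 5 * real (swaps_before (length S))"
    using sum_mono[OF charge_le] by (simp add: sum.distrib sum_distrib_left)
  also have "\<dots> \<le> 24 * real (sched_cost S)"
    using sum_amortized_bound_le_depth displacements sched_cost_eq by (simp add: of_nat_sum)
  finally show ?thesis
    by linarith
qed

end

section \<open>Existence of an optimal schedule\<close>

lemma foldl_apply_Access: "\<forall>a \<in> set as. \<exists>i. a = Access i \<Longrightarrow> foldl apply_action L as = L"
  by (induction as) auto

lemma feasible_access_all_at_deadlines:
  assumes "\<forall>r \<in> set rs. elem r \<in> set L0 \<and> arr r \<le> dl r"
  shows "feasible L0 rs (map (\<lambda>t. (t, Access (length L0))) (deadlines rs))"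
    (is "feasible L0 rs ?S")
  unfolding feasible_def
proof (intro conjI ballI allI impI)
  show "sorted (map fst ?S)"
    by (simp add: comp_def deadlines_def)
  show "valid_action (length L0) (snd ev)" if "ev \<in> set ?S" for ev
    using that assms by (cases L0) (auto simp: deadlines_def)
  fix k assume k: "k < length rs"
  then have "dl (rs ! k) \<in> set (deadlines rs)"
    by (simp add: deadlines_def)
  then obtain j where j: "j < length (deadlines rs)" "deadlines rs ! j = dl (rs ! k)"
    by (metis in_set_conv_nth)
  have "state_before L0 ?S j = L0"
    unfolding state_before_def by (rule foldl_apply_Access) (auto simp: take_map)
  moreover have "elem (rs ! k) \<in> set L0" "arr (rs ! k) \<le> dl (rs ! k)"
    using assms nth_mem[OF k] by blast+
  moreover note pos_le_length[OF calculation(2)]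
  ultimately show "\<exists>j < length ?S. \<exists>i. snd (?S ! j) = Access i \<and> arr (rs ! k) \<le> fst (?S ! j) \<and>
      fst (?S ! j) \<le> dl (rs ! k) \<and> pos (state_before L0 ?S j) (elem (rs ! k)) \<le> i"
    using j by auto
qed

lemma OPT_attained:
  assumes "\<forall>r \<in> set rs. elem r \<in> set L0 \<and> arr r \<le> dl r"
  obtains S where "feasible L0 rs S" "OPT L0 rs = sched_cost S"
proof -
  have "OPT L0 rs \<in> {sched_cost S | S. feasible L0 rs S}"
    unfolding OPT_def using feasible_access_all_at_deadlines[OF assms] by (intro Inf_nat_def1) auto
  then show ?thesis
    using that by blast
qed

theorem theorem1:
  fixes L0 :: "'a list" and rs :: "'a request list"
  assumes "distinct L0"
      and "\<forall>r \<in> set rs. elem r \<in> set L0 \<and> arr r \<le> dl r"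
  shows "ALG L0 rs \<le> 24 * OPT L0 rs"
proof -
  obtain S where S: "feasible L0 rs S" "OPT L0 rs = sched_cost S"
    using OPT_attained[OF assms(2)] .
  interpret alg_vs_schedule L0 rs S
    using assms S(1) by unfold_locales auto
  show ?thesis
    using ALG_le_24_sched_cost S(2) by simp
qed

end
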